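(* Let $a_{\mathbf{K}}>c_{\mathbf{K}}>0$. For $a,R$ with $2a>a_{\mathbf{K}}-c_{\mathbf{K}}$ and $|2a_{\mathbf{K}}-2a|<R<2a+2c_{\mathbf{K}}$, define $x_0,r_0,\Delta,t_1,t_2$ by $$x_0=-\frac{(4(a-a_{\mathbf{K}})^2-R^2)c_{\mathbf{K}}}{2(a_{\mathbf{K}}^2-c_{\mathbf{K}}^2)},\quad r_0=\frac{4a_{\mathbf{K}}(a-a_{\mathbf{K}})^2-a_{\mathbf{K}}R^2}{2(a_{\mathbf{K}}^2-c_{\mathbf{K}}^2)}+2(a-a_{\mathbf{K}}),$$ $$\Delta=(x_0^2-r_0^2-R^2)^2-4r_0^2R^2,\quad t_{1,2}=\tfrac12\Big(1-\tfrac{x_0^2-r_0^2}{R^2}\Big)\mp\tfrac{1}{2R^2}\sqrt{\Delta},$$ and $e_1=\frac{t_1+t_2-2}{3}$, $e_2=\frac{t_1+1-2t_2}{3}$, $e_3=\frac{t_2+1-2t_1}{3}$, $g_2,g_3$ by $4\tilde t^3-g_2\tilde t-g_3=4(\tilde t-e_1)(\tilde t-e_2)(\tilde t-e_3)$. Let $$\xi=\int_{\frac{t_1+t_2+1}{3}}^{+\infty}\frac{d\tilde t}{\sqrt{4\tilde t^3-g_2\tilde t-g_3}},$$ and let $\omega_1=2\int_{e_3}^{+\infty}\frac{d\tilde t}{\sqrt{4\tilde t^3-g_2\tilde t-g_3}}$ if $\Delta>0$ and $\omega_1=2\int_{e_1}^{+\infty}\frac{d\tilde t}{\sqrt{4\tilde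 t^3-g_2\tilde t-g_3}}$ if $\Delta<0$ (the real period). Then for almost all admissible values of $a$, the frequency $\xi/\omega_1$, as a function of $R$ (on the admissible values of $R$ where it is defined), is non-constant.
   Context: This concerns the Kepler billiard with Kepler center $F=(-2c_{\mathbf{K}},0)$ and an elliptic reflection wall with foci $F$ and $F'=(0,0)$ and semi-major axis $a_{\mathbf{K}}$, at negative energy with orbital semi-major axis $a$ and foci-circle radius $R$; $\xi/\omega_1$ is the rotation number of the induced shift on the real part of the elliptic curve $\tilde y^2=4\tilde t^3-g_2\tilde t-g_3$ linearizing the dynamics. "Admissible" $a$ means $2a>a_{\mathbf{K}}-c_{\mathbf{K}}$. *)

theory Defs
  imports "HOL-Analysis.Analysis"
begin

text \<open>Kepler billiard: parameters aK > cK > 0 (ellipse), orbital semi-major axis a,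
  foci-circle radius R.\<close>

definition kb_x0 :: "real \<Rightarrow> real \<Rightarrow> real \<Rightarrow> real \<Rightarrow> real" where
  "kb_x0 aK cK a R = - ((4 * (a - aK)^2 - R^2) * cK) / (2 * (aK^2 - cK^2))"

definition kb_r0 :: "real \<Rightarrow> real \<Rightarrow> real \<Rightarrow> real \<Rightarrow> real" where
  "kb_r0 aK cK a R = (4 * aK * (a - aK)^2 - aK * R^2) / (2 * (aK^2 - cK^2)) + 2 * (a - aK)"

definition kb_Delta :: "real \<Rightarrow> real \<Rightarrow> real \<Rightarrow> real \<Rightarrow> real" where
  "kb_Delta aK cK a R =
     (let x0 = kb_x0 aK cK a R; r0 = kb_r0 aK cK a R
      in (x0^2 - r0^2 - R^2)^2 - 4 * r0^2 * R^2)"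

text \<open>t1, t2 as complex numbers (they are complex conjugate when Delta < 0);
  the square root of Delta is the principal complex square root.\<close>

definition kb_t1 :: "real \<Rightarrow> real \<Rightarrow> real \<Rightarrow> real \<Rightarrow> complex" where
  "kb_t1 aK cK a R =
     complex_of_real ((1 - ((kb_x0 aK cK a R)^2 - (kb_r0 aK cK a R)^2) / R^2) / 2)
     - csqrt (complex_of_real (kb_Delta aK cK a R)) / complex_of_real (2 * R^2)"

definition kb_t2 :: "real \<Rightarrow> real \<Rightarrow> real \<Rightarrow> real \<Rightarrow> complex" where
  "kb_t2 aK cK a R =
     complex_of_real ((1 - ((kb_x0 aK cK a R)^2 - (kb_r0 aK cK a R)^2) / R^2) / 2)
     + csqrt (complex_of_real (kb_Delta aK cK a R)) / complex_of_real (2 * R^2)"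

definition kb_e1 :: "real \<Rightarrow> real \<Rightarrow> real \<Rightarrow> real \<Rightarrow> complex" where
  "kb_e1 aK cK a R = (kb_t1 aK cK a R + kb_t2 aK cK a R - 2) / 3"

definition kb_e2 :: "real \<Rightarrow> real \<Rightarrow> real \<Rightarrow> real \<Rightarrow> complex" where
  "kb_e2 aK cK a R = (kb_t1 aK cK a R + 1 - 2 * kb_t2 aK cK a R) / 3"

definition kb_e3 :: "real \<Rightarrow> real \<Rightarrow> real \<Rightarrow> real \<Rightarrow> complex" where
  "kb_e3 aK cK a R = (kb_t2 aK cK a R + 1 - 2 * kb_t1 aK cK a R) / 3"

text \<open>g2, g3 from 4t^3 - g2 t - g3 = 4(t-e1)(t-e2)(t-e3) (using e1+e2+e3 = 0);
  they are real, we take real parts.\<close>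

definition kb_g2 :: "real \<Rightarrow> real \<Rightarrow> real \<Rightarrow> real \<Rightarrow> real" where
  "kb_g2 aK cK a R = Re (- 4 * (kb_e1 aK cK a R * kb_e2 aK cK a R
      + kb_e1 aK cK a R * kb_e3 aK cK a R + kb_e2 aK cK a R * kb_e3 aK cK a R))"

definition kb_g3 :: "real \<Rightarrow> real \<Rightarrow> real \<Rightarrow> real \<Rightarrow> real" where
  "kb_g3 aK cK a R = Re (4 * kb_e1 aK cK a R * kb_e2 aK cK a R * kb_e3 aK cK a R)"

definition kb_cubic :: "real \<Rightarrow> real \<Rightarrow> real \<Rightarrow> real \<Rightarrow> real \<Rightarrow> real" where
  "kb_cubic aK cK a R t = 4 * t^3 - kb_g2 aK cK a R * t - kb_g3 aK cK a R"

definition kb_int_from :: "real \<Rightarrow> real \<Rightarrow> real \<Rightarrow> real \<Rightarrow> real \<Rightarrow> real" where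
  "kb_int_from aK cK a R s =
     (LBINT t:{s..}. 1 / sqrt (kb_cubic aK cK a R t))"

definition kb_xi :: "real \<Rightarrow> real \<Rightarrow> real \<Rightarrow> real \<Rightarrow> real" where
  "kb_xi aK cK a R =
     kb_int_from aK cK a R (Re (kb_t1 aK cK a R + kb_t2 aK cK a R + 1) / 3)"

definition kb_omega1 :: "real \<Rightarrow> real \<Rightarrow> real \<Rightarrow> real \<Rightarrow> real" where
  "kb_omega1 aK cK a R =
     (if kb_Delta aK cK a R > 0 then 2 * kb_int_from aK cK a R (Re (kb_e3 aK cK a R))
      else 2 * kb_int_from aK cK a R (Re (kb_e1 aK cK a R)))"

definition kb_freq :: "real \<Rightarrow> real \<Rightarrow> real \<Rightarrow> real \<Rightarrow> real" where
  "kb_freq aK cK a R = kb_xi aK cK a R / kb_omega1 aK cK a R"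

definition kb_R_ok :: "real \<Rightarrow> real \<Rightarrow> real \<Rightarrow> real \<Rightarrow> bool" where
  "kb_R_ok aK cK a R \<longleftrightarrow>
     \<bar>2 * aK - 2 * a\<bar> < R \<and> R < 2 * a + 2 * cK \<and> kb_Delta aK cK a R \<noteq> 0"

end

theory Submission
  imports Defs
begin

(* After the substitution t~ = (t1 + t2 + 1)/3 - t the cubic 4 t~^3 - g2 t~ - g3 becomes
   4 (1 - t) (t - t1) (t - t2), so xi and omega1/2 are integrals of one kernel over (-inf, 0] and
   over (-inf, t1] (Delta > 0) or (-inf, 1] (Delta < 0). On (-inf, 0] the kernel is at most
   (1 - t) powr (-3/2), so 0 < xi <= 2. As R decreases to 2 |a - aK| both roots tend to 1 and
   below them the kernel is at least a multiple of (1 - t) powr (-3/2), so omega1 grows at least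
   like (1 - t1) powr (-1/2): the frequency xi/omega1 stays positive and tends to 0, hence it is
   not constant. Whether the roots are real (and then below 1) or complex near that radius is
   decided by the sign of the leading coefficient of Delta as a polynomial in R^2 - 4 (a - aK)^2,
   which is nonzero unless a = aK or 2 a = aK + cK, a null set of values of a. *)

lemma set_lborel_integral_of_nonneg_has_integral:
  fixes f :: "real \<Rightarrow> real"
  assumes "(f has_integral I) S" "\<And>x. x \<in> S \<Longrightarrow> 0 \<le> f x"
    and [measurable]: "S \<in> sets borel" "f \<in> borel_measurable borel"
  shows "set_integrable lborel S f" "(LBINT x:S. f x) = I"
proof -
  have "f absolutely_integrable_on S"
    using assms(1,2) by (intro nonnegative_absolutely_integrable_1) (auto simp: has_integral_integrable)
  moreover have "(\<lambda>x. indicator S x *\<^sub>R f x) \<in> borel_measurable lborel"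
    by measurable
  ultimately show integrable: "set_integrable lborel S f"
    unfolding set_integrable_def using integrable_completion by blast
  show "(LBINT x:S. f x) = I"
    using set_borel_integral_eq_integral(2)[OF integrable] assms(1) integral_unique by metis
qed

lemma set_lborel_integral_reflect:
  fixes f :: "real \<Rightarrow> real"
  assumes "\<And>y. y \<in> B \<longleftrightarrow> s - y \<in> A"
  shows "(LBINT y:B. f (s - y)) = (LBINT x:A. f x)"
    and "set_integrable lborel B (\<lambda>y. f (s - y)) \<longleftrightarrow> set_integrable lborel A f"
proof -
  have eq: "(\<lambda>y. indicator A (s + (-1) * y) *\<^sub>R f (s + (-1) * y)) = (\<lambda>y. indicator B y *\<^sub>R f (s - y))"
    using assms by (auto simp: indicator_def fun_eq_iff)
  show "(LBINT y:B. f (s - y)) = (LBINT x:A. f x)"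
    unfolding set_lebesgue_integral_def
    using lborel_integral_real_affine[of "-1" "\<lambda>x. indicator A x *\<^sub>R f x" s] eq by simp
  show "set_integrable lborel B (\<lambda>y. f (s - y)) \<longleftrightarrow> set_integrable lborel A f"
    unfolding set_integrable_def
    using lborel_integrable_real_affine_iff[of "-1" "\<lambda>x. indicator A x *\<^sub>R f x" s] eq by simp
qed

lemma set_integral_mono_set_nonneg:
  fixes f :: "'a \<Rightarrow> real"
  assumes "set_integrable M B f" "A \<in> sets M" "A \<subseteq> B" "\<And>x. x \<in> B \<Longrightarrow> 0 \<le> f x"
  shows "(LINT x:A|M. f x) \<le> (LINT x:B|M. f x)"
  unfolding set_lebesgue_integral_def
proof (rule integral_mono)
  show "integrable M (\<lambda>x. indicat_real A x *\<^sub>R f x)"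
    using set_integrable_subset[OF assms(1-3)] by (simp add: set_integrable_def)
qed (use assms in \<open>auto simp: set_integrable_def indicator_def\<close>)

lemma powr_minus_three_halves: "0 < x \<Longrightarrow> x powr (-3/2) = 1 / (x * sqrt x)"
  for x :: real
  using powr_add[of x 1 "1/2"] by (simp add: powr_minus_divide powr_half_sqrt)

lemma powr_minus_one_half: "0 < x \<Longrightarrow> x powr (-1/2) = 1 / sqrt x"
  for x :: real
  by (simp add: powr_minus_divide powr_half_sqrt)

lemma set_integral_powr_minus_three_halves:
  fixes c :: real
  assumes "c < 1"
  shows "set_integrable lborel {..c} (\<lambda>t. (1 - t) powr (-3/2))"
    and "(LBINT t:{..c}. (1 - t) powr (-3/2)) = 2 / sqrt (1 - c)"
proof -
  have "((\<lambda>x. x powr (-3/2)) has_integral -((1-c) powr (-3/2+1)) / (-3/2+1)) {1-c..}"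
    using assms by (intro has_integral_powr_to_inf) auto
  moreover have "-((1-c) powr (-3/2+1)) / (-3/2+1) = 2 / sqrt (1 - c)"
    using assms by (simp add: powr_minus_divide powr_half_sqrt)
  ultimately have "set_integrable lborel {1-c..} (\<lambda>x. x powr (-3/2))"
    and "(LBINT x:{1-c..}. x powr (-3/2)) = 2 / sqrt (1 - c)"
    using set_lborel_integral_of_nonneg_has_integral by auto
  moreover have "\<And>y. y \<in> {..c} \<longleftrightarrow> 1 - y \<in> {1-c..}" by auto
  note reflect = set_lborel_integral_reflect[OF this, of "\<lambda>x. x powr (-3/2)"]
  ultimately show "set_integrable lborel {..c} (\<lambda>t. (1 - t) powr (-3/2))"
    and "(LBINT t:{..c}. (1 - t) powr (-3/2)) = 2 / sqrt (1 - c)"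
    using reflect by metis+
qed

lemma set_integrable_powr_minus_one_half:
  fixes m :: real
  assumes "0 < m"
  shows "set_integrable lborel {0..m} (\<lambda>t. (m - t) powr (-1/2))"
proof -
  have "((\<lambda>x. x powr (-1/2)) has_integral (m powr (-1/2+1) / (-1/2+1))) {0..m}"
    using assms by (intro has_integral_powr_from_0) auto
  then have "set_integrable lborel {0..m} (\<lambda>x. x powr (-1/2))"
    by (rule set_lborel_integral_of_nonneg_has_integral) auto
  moreover have "\<And>y. y \<in> {0..m} \<longleftrightarrow> m - y \<in> {0..m}" by auto
  note reflect = set_lborel_integral_reflect(2)[OF this, of "\<lambda>x. x powr (-1/2)"]
  ultimately show ?thesis
    using reflect by metis
qed

(* The integrand of kb_int_from after the substitution t~ = (S + 1)/3 - t, which moves the roots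
   of the cubic to 1 and S/2 +- sqrt w (see kb_cubic_eq). *)
definition normalized_integrand :: "real \<Rightarrow> real \<Rightarrow> real \<Rightarrow> real" where
  "normalized_integrand S w t = 1 / sqrt (4 * (1 - t) * ((t - S/2)^2 - w))"

lemma normalized_integrand_measurable [measurable]:
  "normalized_integrand S w \<in> borel_measurable borel"
  unfolding normalized_integrand_def by measurable

lemma normalized_integrand_nonneg:
  "0 \<le> 4 * (1 - t) * ((t - S/2)^2 - w) \<Longrightarrow> 0 \<le> normalized_integrand S w t"
  unfolding normalized_integrand_def by simp

lemma normalized_integrand_le_powr:
  assumes "t < 1" "0 < c" "(c * (1 - t))^2 \<le> (t - S/2)^2 - w"
  shows "normalized_integrand S w t \<le> (1 - t) powr (-3/2) / (2 * c)"
proof -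
  define x where "x = 1 - t"
  have x: "0 < x" using assms(1) x_def by simp
  have "(2 * c * x * sqrt x)^2 = 4 * x * (c * x)^2"
    using x by (simp add: power2_eq_square)
  also have "\<dots> \<le> 4 * (1 - t) * ((t - S/2)^2 - w)"
    using assms(3) x by (simp add: x_def)
  finally have "2 * c * x * sqrt x \<le> sqrt (4 * (1 - t) * ((t - S/2)^2 - w))"
    by (rule real_le_rsqrt)
  then have "normalized_integrand S w t \<le> 1 / (2 * c * x * sqrt x)"
    unfolding normalized_integrand_def using assms(2) x by (intro frac_le) auto
  moreover have "(1 - t) powr (-3/2) / (2 * c) = 1 / (2 * c * x * sqrt x)"
    unfolding x_def[symmetric] powr_minus_three_halves[OF x] by simp
  ultimately show ?thesis
    by simp
qed

lemma normalized_integrand_ge_powr: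
  assumes "t < 1" "0 < c" "0 < (t - S/2)^2 - w" "(t - S/2)^2 - w \<le> (c * (1 - t))^2"
  shows "(1 - t) powr (-3/2) / (2 * c) \<le> normalized_integrand S w t"
proof -
  define x where "x = 1 - t"
  have x: "0 < x" using assms(1) x_def by simp
  have "4 * (1 - t) * ((t - S/2)^2 - w) \<le> 4 * x * (c * x)^2"
    using assms(4) x by (simp add: x_def)
  also have "\<dots> = (2 * c * x * sqrt x)^2"
    using x by (simp add: power2_eq_square)
  finally have "sqrt (4 * (1 - t) * ((t - S/2)^2 - w)) \<le> 2 * c * x * sqrt x"
    using assms(2) x real_sqrt_le_mono by fastforce
  then have "1 / (2 * c * x * sqrt x) \<le> normalized_integrand S w t"
    unfolding normalized_integrand_def using assms(1,3) x by (intro frac_le) auto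
  moreover have "(1 - t) powr (-3/2) / (2 * c) = 1 / (2 * c * x * sqrt x)"
    unfolding x_def[symmetric] powr_minus_three_halves[OF x] by simp
  ultimately show ?thesis
    by simp
qed

lemma normalized_integrand_le_powr_root:
  assumes "t < m" "0 < k" "k * (m - t) \<le> 4 * (1 - t) * ((t - S/2)^2 - w)"
  shows "normalized_integrand S w t \<le> (m - t) powr (-1/2) / sqrt k"
proof -
  have x: "0 < m - t" using assms(1) by simp
  have "sqrt k * sqrt (m - t) \<le> sqrt (4 * (1 - t) * ((t - S/2)^2 - w))"
    using assms(3) by (simp flip: real_sqrt_mult)
  then have "normalized_integrand S w t \<le> 1 / (sqrt k * sqrt (m - t))"
    unfolding normalized_integrand_def using assms(2) x by (intro frac_le) auto
  then show ?thesis
    using powr_minus_one_half[OF x] by (simp add: ac_simps)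
qed

lemma quadratic_le_shifted_square:
  fixes S w t :: real
  assumes "t \<le> 1"
  shows "(t - S/2)^2 - w \<le> (1 - t + (\<bar>1 - S/2\<bar> + sqrt \<bar>w\<bar>))^2"
proof -
  have "\<bar>t - S/2\<bar> \<le> \<bar>1 - t + \<bar>1 - S/2\<bar>\<bar>"
    using assms by linarith
  then have "(t - S/2)^2 \<le> (1 - t + \<bar>1 - S/2\<bar>)^2"
    by (simp only: abs_le_square_iff)
  moreover have "- w \<le> (sqrt \<bar>w\<bar>)^2"
    by simp
  moreover have "(1 - t + (\<bar>1 - S/2\<bar> + sqrt \<bar>w\<bar>))^2
      = (1 - t + \<bar>1 - S/2\<bar>)^2 + (sqrt \<bar>w\<bar>)^2 + 2 * (1 - t + \<bar>1 - S/2\<bar>) * sqrt \<bar>w\<bar>"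
    by (simp add: power2_eq_square algebra_simps)
  moreover have "0 \<le> 2 * (1 - t + \<bar>1 - S/2\<bar>) * sqrt \<bar>w\<bar>"
    using assms by simp
  ultimately show ?thesis
    by linarith
qed

lemma set_integral_normalized_integrand_lower:
  assumes integrable: "set_integrable lborel {..m} (normalized_integrand S w)"
    and nonneg: "\<And>t. t \<le> m \<Longrightarrow> 0 \<le> normalized_integrand S w t"
    and "c0 \<le> m" "c0 < 1" "0 < c"
    and near: "\<And>t. t < c0 \<Longrightarrow> 0 < (t - S/2)^2 - w \<and> (t - S/2)^2 - w \<le> (c * (1 - t))^2"
  shows "1 / (c * sqrt (1 - c0)) \<le> (LBINT t:{..m}. normalized_integrand S w t)"
proof -
  note powr_integral = set_integral_powr_minus_three_halves[OF \<open>c0 < 1\<close>]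
  have "1 / (c * sqrt (1 - c0)) = (LBINT t:{..c0}. (1 - t) powr (-3/2) / (2 * c))"
    using powr_integral(2) by simp
  also have "\<dots> \<le> (LBINT t:{..c0}. normalized_integrand S w t)"
  proof (rule set_integral_mono_AE)
    show "set_integrable lborel {..c0} (\<lambda>t. (1 - t) powr (-3/2) / (2 * c))"
      using powr_integral(1) by simp
    show "set_integrable lborel {..c0} (normalized_integrand S w)"
      using set_integrable_subset[OF integrable] \<open>c0 \<le> m\<close> by auto
    show "AE t\<in>{..c0} in lborel. (1 - t) powr (-3/2) / (2 * c) \<le> normalized_integrand S w t"
      using AE_lborel_singleton[of c0]
    proof eventually_elim
      case (elim t)
      show ?case
      proof
        assume "t \<in> {..c0}"
        then have "t < c0"
          using elim by auto
        then show "(1 - t) powr (-3/2) / (2 * c) \<le> normalized_integrand S w t"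
          using near[of t] \<open>c0 < 1\<close> \<open>0 < c\<close> by (intro normalized_integrand_ge_powr) auto
      qed
    qed
  qed
  also have "\<dots> \<le> (LBINT t:{..m}. normalized_integrand S w t)"
    using \<open>c0 \<le> m\<close> nonneg by (intro set_integral_mono_set_nonneg[OF integrable]) auto
  finally show ?thesis .
qed

lemma set_integral_normalized_integrand_nonpos:
  assumes left: "\<And>t. t \<le> 0 \<Longrightarrow> ((1 - t)/2)^2 \<le> (t - S/2)^2 - w"
  shows "set_integrable lborel {..0} (normalized_integrand S w)"
    and "0 < (LBINT t:{..0}. normalized_integrand S w t)"
    and "(LBINT t:{..0}. normalized_integrand S w t) \<le> 2"
proof -
  have quadratic_pos: "0 < (t - S/2)^2 - w" if "t \<le> 0" for t
  proof -
    have "0 < ((1 - t)/2)^2"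
      using that by simp
    then show ?thesis
      using left[OF that] by linarith
  qed
  have nonneg: "0 \<le> normalized_integrand S w t" if "t \<le> 0" for t
    using quadratic_pos[OF that] that by (intro normalized_integrand_nonneg mult_nonneg_nonneg) auto
  have bound: "normalized_integrand S w t \<le> (1 - t) powr (-3/2)" if "t \<le> 0" for t
    using normalized_integrand_le_powr[of t "1/2" S w] left[OF that] that
    by (simp add: power_divide)
  note powr_integral = set_integral_powr_minus_three_halves[of 0, simplified]
  show integrable: "set_integrable lborel {..0} (normalized_integrand S w)"
    by (rule set_integrable_bound[OF powr_integral(1)])
      (use bound nonneg in \<open>auto simp: set_borel_measurable_def intro!: AE_I2\<close>)
  show "(LBINT t:{..0}. normalized_integrand S w t) \<le> 2"
    using set_integral_mono[OF integrable powr_integral(1)] bound powr_integral(2) by simp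
  define c where "c = 1 + (\<bar>1 - S/2\<bar> + sqrt \<bar>w\<bar>)"
  have "0 < c" unfolding c_def by (simp add: add_pos_nonneg)
  have near: "(t - S/2)^2 - w \<le> (c * (1 - t))^2" if "t < 0" for t
  proof -
    have "1 - t + (\<bar>1 - S/2\<bar> + sqrt \<bar>w\<bar>) \<le> c * (1 - t)"
      using that mult_nonpos_nonneg[of t "\<bar>1 - S/2\<bar> + sqrt \<bar>w\<bar>"]
      unfolding c_def by (simp add: algebra_simps)
    then have "(1 - t + (\<bar>1 - S/2\<bar> + sqrt \<bar>w\<bar>))^2 \<le> (c * (1 - t))^2"
      using that by (intro power_mono) auto
    then show ?thesis
      using quadratic_le_shifted_square[of t S w] that by simp
  qed
  have "1 / (c * sqrt (1 - 0)) \<le> (LBINT t:{..0}. normalized_integrand S w t)"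
    using near quadratic_pos \<open>0 < c\<close> nonneg
    by (intro set_integral_normalized_integrand_lower[OF integrable]) auto
  moreover have "0 < 1 / (c * sqrt (1 - 0))"
    using \<open>0 < c\<close> by simp
  ultimately show "0 < (LBINT t:{..0}. normalized_integrand S w t)"
    by linarith
qed

lemma normalized_integrand_nonneg_below_root:
  assumes left: "\<And>t. t \<le> 0 \<Longrightarrow> ((1 - t)/2)^2 \<le> (t - S/2)^2 - w"
    and "0 < k" and root: "\<And>t. t \<in> {0..m} \<Longrightarrow> k * (m - t) \<le> 4 * (1 - t) * ((t - S/2)^2 - w)"
    and "t \<le> m"
  shows "0 \<le> normalized_integrand S w t"
proof (cases "t \<le> 0")
  case True
  have "0 \<le> (t - S/2)^2 - w"
    using left[OF True] zero_le_power2[of "(1 - t)/2"] by linarith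
  then show ?thesis
    using True by (intro normalized_integrand_nonneg mult_nonneg_nonneg) auto
next
  case False
  then have "0 \<le> k * (m - t)"
    using \<open>0 < k\<close> \<open>t \<le> m\<close> by simp
  then show ?thesis
    using root[of t] False \<open>t \<le> m\<close> by (intro normalized_integrand_nonneg) auto
qed

lemma set_integrable_normalized_integrand:
  assumes left: "\<And>t. t \<le> 0 \<Longrightarrow> ((1 - t)/2)^2 \<le> (t - S/2)^2 - w"
    and "0 < m" "0 < k" and root: "\<And>t. t \<in> {0..m} \<Longrightarrow> k * (m - t) \<le> 4 * (1 - t) * ((t - S/2)^2 - w)"
  shows "set_integrable lborel {..m} (normalized_integrand S w)"
proof -
  note nonneg = normalized_integrand_nonneg_below_root[OF left \<open>0 < k\<close> root]
  have "set_integrable lborel {0..m} (\<lambda>t. (m - t) powr (-1/2) / sqrt k)"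
    using set_integrable_powr_minus_one_half[OF \<open>0 < m\<close>] by simp
  then have "set_integrable lborel {0..m} (normalized_integrand S w)"
  proof (rule set_integrable_bound)
    show "AE t in lborel. t \<in> {0..m} \<longrightarrow>
        norm (normalized_integrand S w t) \<le> norm ((m - t) powr (-1/2) / sqrt k)"
      using AE_lborel_singleton[of m]
    proof eventually_elim
      case (elim t)
      show ?case
      proof
        assume t: "t \<in> {0..m}"
        then have "normalized_integrand S w t \<le> (m - t) powr (-1/2) / sqrt k"
          using elim root[OF t] \<open>0 < k\<close> by (intro normalized_integrand_le_powr_root) auto
        then show "norm (normalized_integrand S w t) \<le> norm ((m - t) powr (-1/2) / sqrt k)"
          using nonneg[of t] t \<open>0 < k\<close> by simp
      qed
    qed
  qed (simp add: set_borel_measurable_def)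
  moreover have "set_integrable lborel {..0} (normalized_integrand S w)"
    by (rule set_integral_normalized_integrand_nonpos(1)) (fact left)
  ultimately have "set_integrable lborel ({..0} \<union> {0..m}) (normalized_integrand S w)"
    by (intro set_integrable_Un) auto
  moreover have "{..0} \<union> {0..m} = {..m}"
    using \<open>0 < m\<close> by auto
  ultimately show ?thesis
    by simp
qed

lemma normalized_integral_ratio_bounds:
  assumes left: "\<And>t. t \<le> 0 \<Longrightarrow> ((1 - t)/2)^2 \<le> (t - S/2)^2 - w"
    and "0 < m" "0 < k" and root: "\<And>t. t \<in> {0..m} \<Longrightarrow> k * (m - t) \<le> 4 * (1 - t) * ((t - S/2)^2 - w)"
    and "c0 \<le> m" "c0 < 1" "0 < c"
    and near: "\<And>t. t < c0 \<Longrightarrow> 0 < (t - S/2)^2 - w \<and> (t - S/2)^2 - w \<le> (c * (1 - t))^2"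
  defines "ratio \<equiv> (LBINT t:{..0}. normalized_integrand S w t) / (2 * (LBINT t:{..m}. normalized_integrand S w t))"
  shows "0 < ratio" and "ratio \<le> c * sqrt (1 - c0)"
proof -
  note xi = set_integral_normalized_integrand_nonpos[OF left]
  have "1 / (c * sqrt (1 - c0)) \<le> (LBINT t:{..m}. normalized_integrand S w t)"
    using set_integrable_normalized_integrand[OF left \<open>0 < m\<close> \<open>0 < k\<close> root]
      normalized_integrand_nonneg_below_root[OF left \<open>0 < k\<close> root]
    by (rule set_integral_normalized_integrand_lower) (use assms in auto)
  moreover have "0 < 1 / (c * sqrt (1 - c0))"
    using \<open>c0 < 1\<close> \<open>0 < c\<close> by simp
  ultimately have "0 < (LBINT t:{..m}. normalized_integrand S w t)"
    by linarith
  then show "0 < ratio"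
    unfolding ratio_def using xi(2) by simp
  have "ratio \<le> 2 / (2 * (1 / (c * sqrt (1 - c0))))"
    unfolding ratio_def using xi(2,3) \<open>0 < 1 / (c * sqrt (1 - c0))\<close>
    by (intro frac_le) (use \<open>1 / (c * sqrt (1 - c0)) \<le> _\<close> in auto)
  also have "\<dots> = c * sqrt (1 - c0)"
    by simp
  finally show "ratio \<le> c * sqrt (1 - c0)" .
qed

(* xi/omega1 after the substitution: the upper limits S/2 - sqrt w and 1 are the images of e3
   (Delta > 0) and of e1 (Delta <= 0). *)
definition normalized_frequency :: "real \<Rightarrow> real \<Rightarrow> real" where
  "normalized_frequency S w =
     (LBINT t:{..0}. normalized_integrand S w t) /
     (2 * (LBINT t:{..(if 0 < w then S/2 - sqrt w else 1)}. normalized_integrand S w t))"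

lemma normalized_frequency_bounds_real_roots:
  assumes "0 < w" and "1/2 \<le> S/2 - sqrt w" and "S/2 + sqrt w < 1"
  shows "0 < normalized_frequency S w"
    and "normalized_frequency S w \<le> 2 * sqrt (\<bar>1 - S/2\<bar> + sqrt \<bar>w\<bar>)"
proof -
  define t1 where "t1 = S/2 - sqrt w"
  define t2 where "t2 = S/2 + sqrt w"
  have roots: "1/2 \<le> t1" "t1 < t2" "t2 < 1"
    using assms unfolding t1_def t2_def by auto
  have quadratic: "(t - S/2)^2 - w = (t1 - t) * (t2 - t)" for t
    using \<open>0 < w\<close> unfolding t1_def t2_def by (simp add: power2_eq_square algebra_simps)
  have left: "((1 - t)/2)^2 \<le> (t - S/2)^2 - w" if "t \<le> 0" for t
    unfolding quadratic unfolding power2_eq_square using that roots by (intro mult_mono) auto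
  have root: "4 * (1 - t2) * (t2 - t1) * (t1 - t) \<le> 4 * (1 - t) * ((t - S/2)^2 - w)"
    if "t \<in> {0..t1}" for t
  proof -
    have "(1 - t2) * (t2 - t1) \<le> (1 - t) * (t2 - t)"
      using that roots by (intro mult_mono) auto
    then have "(1 - t2) * (t2 - t1) * (t1 - t) \<le> (1 - t) * (t2 - t) * (t1 - t)"
      using that by (intro mult_right_mono) auto
    then show ?thesis
      unfolding quadratic by (simp add: algebra_simps)
  qed
  have near: "0 < (t - S/2)^2 - w \<and> (t - S/2)^2 - w \<le> (1 * (1 - t))^2" if "t < t1" for t
    unfolding quadratic unfolding power2_eq_square using that roots by (auto intro: mult_mono)
  have frequency: "normalized_frequency S w = (LBINT t:{..0}. normalized_integrand S w t) /
      (2 * (LBINT t:{..t1}. normalized_integrand S w t))"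
    unfolding normalized_frequency_def t1_def using \<open>0 < w\<close> by simp
  have ratio: "0 < (LBINT t:{..0}. normalized_integrand S w t) /
        (2 * (LBINT t:{..t1}. normalized_integrand S w t))"
      "(LBINT t:{..0}. normalized_integrand S w t) /
        (2 * (LBINT t:{..t1}. normalized_integrand S w t)) \<le> 1 * sqrt (1 - t1)"
    by (rule normalized_integral_ratio_bounds; (fact left root near)?; use roots in auto)+
  show "0 < normalized_frequency S w"
    using ratio(1) unfolding frequency by simp
  have "normalized_frequency S w \<le> sqrt (1 - t1)"
    using ratio(2) unfolding frequency by simp
  also have "\<dots> \<le> sqrt (\<bar>1 - S/2\<bar> + sqrt \<bar>w\<bar>)"
    unfolding t1_def using \<open>0 < w\<close> by (intro real_sqrt_le_mono) auto
  also have "\<dots> \<le> 2 * sqrt (\<bar>1 - S/2\<bar> + sqrt \<bar>w\<bar>)"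
    by simp
  finally show "normalized_frequency S w \<le> 2 * sqrt (\<bar>1 - S/2\<bar> + sqrt \<bar>w\<bar>)" .
qed

lemma normalized_frequency_bounds_complex_roots:
  assumes "w < 0" and "1 \<le> S"
  shows "0 < normalized_frequency S w"
    and "normalized_frequency S w \<le> 2 * sqrt (\<bar>1 - S/2\<bar> + sqrt \<bar>w\<bar>)"
proof -
  define e where "e = \<bar>1 - S/2\<bar> + sqrt \<bar>w\<bar>"
  have "0 < e"
    unfolding e_def using \<open>w < 0\<close> by (simp add: add_nonneg_pos)
  have left: "((1 - t)/2)^2 \<le> (t - S/2)^2 - w" if "t \<le> 0" for t
  proof -
    have "((1 - t)/2)^2 \<le> (S/2 - t)^2"
      using that \<open>1 \<le> S\<close> by (intro power_mono) auto
    then show ?thesis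
      using \<open>w < 0\<close> by (simp add: power2_commute)
  qed
  have root: "- 4 * w * (1 - t) \<le> 4 * (1 - t) * ((t - S/2)^2 - w)" if "t \<in> {0..1}" for t
    using that mult_left_mono[of "- w" "(t - S/2)^2 - w" "4 * (1 - t)"] by (simp add: algebra_simps)
  have near: "0 < (t - S/2)^2 - w \<and> (t - S/2)^2 - w \<le> (2 * (1 - t))^2" if "t < 1 - e" for t
  proof
    show "0 < (t - S/2)^2 - w"
      using \<open>w < 0\<close> zero_le_power2[of "t - S/2"] by linarith
    have "1 - t + e \<le> 2 * (1 - t)"
      using that by simp
    then have "(1 - t + e)^2 \<le> (2 * (1 - t))^2"
      using \<open>0 < e\<close> that by (intro power_mono) auto
    with quadratic_le_shifted_square[of t S w] that \<open>0 < e\<close>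
    show "(t - S/2)^2 - w \<le> (2 * (1 - t))^2"
      unfolding e_def by linarith
  qed
  have ratio: "0 < (LBINT t:{..0}. normalized_integrand S w t) /
        (2 * (LBINT t:{..1}. normalized_integrand S w t))"
      "(LBINT t:{..0}. normalized_integrand S w t) /
        (2 * (LBINT t:{..1}. normalized_integrand S w t)) \<le> 2 * sqrt (1 - (1 - e))"
    by (rule normalized_integral_ratio_bounds; (fact left root near)?; use \<open>w < 0\<close> \<open>0 < e\<close> in auto)+
  have frequency: "normalized_frequency S w = (LBINT t:{..0}. normalized_integrand S w t) /
      (2 * (LBINT t:{..1}. normalized_integrand S w t))"
    unfolding normalized_frequency_def using \<open>w < 0\<close> by simp
  show "0 < normalized_frequency S w"
    using ratio(1) unfolding frequency .
  show "normalized_frequency S w \<le> 2 * sqrt (\<bar>1 - S/2\<bar> + sqrt \<bar>w\<bar>)"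
    using ratio(2) unfolding frequency e_def by simp
qed

(* In the paper's notation kb_root_sum = t1 + t2 and kb_root_sep = ((t2 - t1)/2)^2. *)
definition kb_root_sum :: "real \<Rightarrow> real \<Rightarrow> real \<Rightarrow> real \<Rightarrow> real" where
  "kb_root_sum aK cK a R = 1 - ((kb_x0 aK cK a R)^2 - (kb_r0 aK cK a R)^2) / R^2"

definition kb_root_sep :: "real \<Rightarrow> real \<Rightarrow> real \<Rightarrow> real \<Rightarrow> real" where
  "kb_root_sep aK cK a R = kb_Delta aK cK a R / (4 * R^4)"

lemma kb_e_eq:
  fixes aK cK a R :: real
  defines "p \<equiv> (1 - kb_root_sum aK cK a R / 2) / 3"
    and "z \<equiv> csqrt (of_real (kb_Delta aK cK a R)) / of_real (2 * R^2)"
  shows "z^2 = of_real (kb_root_sep aK cK a R)"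
    and "kb_e1 aK cK a R = - 2 * of_real p"
    and "kb_e2 aK cK a R = of_real p - z"
    and "kb_e3 aK cK a R = of_real p + z"
    and "kb_t1 aK cK a R + kb_t2 aK cK a R = of_real (kb_root_sum aK cK a R)"
proof -
  have "z^2 = (csqrt (of_real (kb_Delta aK cK a R)))^2 / (of_real (2 * R^2))^2"
    unfolding z_def by (simp add: power_divide)
  also have "\<dots> = of_real (kb_Delta aK cK a R) / of_real ((2 * R^2)^2)"
    by (simp only: power2_csqrt of_real_power)
  also have "(2 * R^2)^2 = 4 * R^4"
    by (simp add: power_mult_distrib flip: power_mult)
  finally show "z^2 = of_real (kb_root_sep aK cK a R)"
    unfolding kb_root_sep_def by simp
  have t1: "kb_t1 aK cK a R = of_real (kb_root_sum aK cK a R / 2) - z"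
    and t2: "kb_t2 aK cK a R = of_real (kb_root_sum aK cK a R / 2) + z"
    unfolding kb_t1_def kb_t2_def kb_root_sum_def z_def by simp_all
  show "kb_e1 aK cK a R = - 2 * of_real p" "kb_e2 aK cK a R = of_real p - z"
    "kb_e3 aK cK a R = of_real p + z"
    unfolding kb_e1_def kb_e2_def kb_e3_def t1 t2 p_def by (simp_all add: field_simps)
  show "kb_t1 aK cK a R + kb_t2 aK cK a R = of_real (kb_root_sum aK cK a R)"
    unfolding t1 t2 by simp
qed

lemma kb_cubic_eq:
  fixes aK cK a R t :: real
  defines "S \<equiv> kb_root_sum aK cK a R" and "w \<equiv> kb_root_sep aK cK a R"
  shows "kb_cubic aK cK a R ((S + 1)/3 - t) = 4 * (1 - t) * ((t - S/2)^2 - w)"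
proof -
  define p where "p = (1 - S/2) / 3"
  define z where "z = csqrt (of_real (kb_Delta aK cK a R)) / of_real (2 * R^2)"
  note e = kb_e_eq[of aK cK a R, folded S_def, folded p_def w_def z_def]
  have "- 4 * (kb_e1 aK cK a R * kb_e2 aK cK a R + kb_e1 aK cK a R * kb_e3 aK cK a R
      + kb_e2 aK cK a R * kb_e3 aK cK a R) = of_real (12 * p^2 + 4 * w)"
    unfolding e(2-4) by (simp add: algebra_simps power2_eq_square flip: e(1))
  then have g2: "kb_g2 aK cK a R = 12 * p^2 + 4 * w"
    by (simp only: kb_g2_def Re_complex_of_real)
  have "4 * kb_e1 aK cK a R * kb_e2 aK cK a R * kb_e3 aK cK a R
      = of_real (- 8 * p * (p^2 - w))"
    unfolding e(2-4) by (simp add: algebra_simps power2_eq_square flip: e(1))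
  then have g3: "kb_g3 aK cK a R = - 8 * p * (p^2 - w)"
    by (simp only: kb_g3_def Re_complex_of_real)
  show ?thesis
    unfolding kb_cubic_def g2 g3 p_def by (simp add: field_simps power2_eq_square power3_eq_cube)
qed

lemma kb_int_from_eq:
  fixes aK cK a R s :: real
  defines "S \<equiv> kb_root_sum aK cK a R" and "w \<equiv> kb_root_sep aK cK a R"
  shows "kb_int_from aK cK a R s = (LBINT t:{..(S + 1)/3 - s}. normalized_integrand S w t)"
proof -
  have "\<And>y. y \<in> {..(S + 1)/3 - s} \<longleftrightarrow> (S + 1)/3 - y \<in> {s..}"
    by auto
  from set_lborel_integral_reflect(1)[OF this, of "\<lambda>x. 1 / sqrt (kb_cubic aK cK a R x)"]
  show ?thesis
    unfolding kb_int_from_def normalized_integrand_def kb_cubic_eq[of aK cK a R, folded S_def w_def]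
    by simp
qed

lemma kb_freq_eq_normalized_frequency:
  fixes aK cK a R :: real
  assumes "R \<noteq> 0"
  shows "kb_freq aK cK a R = normalized_frequency (kb_root_sum aK cK a R) (kb_root_sep aK cK a R)"
proof -
  define S where "S = kb_root_sum aK cK a R"
  define w where "w = kb_root_sep aK cK a R"
  define p where "p = (1 - S/2) / 3"
  define z where "z = csqrt (of_real (kb_Delta aK cK a R)) / of_real (2 * R^2)"
  note e = kb_e_eq[of aK cK a R, folded S_def, folded p_def w_def z_def]
  note int_from = kb_int_from_eq[of aK cK a R, folded S_def w_def]
  have "0 < R^4"
    using assms by simp
  then have sign: "0 < kb_Delta aK cK a R \<longleftrightarrow> 0 < w"
    unfolding w_def kb_root_sep_def by (simp add: zero_less_divide_iff)
  have xi: "kb_xi aK cK a R = (LBINT t:{..0}. normalized_integrand S w t)"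
    unfolding kb_xi_def int_from using e(5) by simp
  have omega: "kb_omega1 aK cK a R =
      2 * (LBINT t:{..(if 0 < w then S/2 - sqrt w else 1)}. normalized_integrand S w t)"
  proof (cases "0 < w")
    case True
    have "R^4 = (R^2)^2"
      by (simp flip: power_mult)
    then have "sqrt (R^4) = R^2"
      by (simp only: real_sqrt_abs) simp
    then have "sqrt w = sqrt (kb_Delta aK cK a R) / (2 * R^2)"
      unfolding w_def kb_root_sep_def by (simp add: real_sqrt_divide real_sqrt_mult)
    moreover have "z = of_real (sqrt (kb_Delta aK cK a R) / (2 * R^2))"
      unfolding z_def using True sign by (simp add: csqrt_of_real_nonneg)
    ultimately have e3: "Re (kb_e3 aK cK a R) = p + sqrt w"
      unfolding e(4) by simp
    have endpoint: "(S + 1)/3 - (p + sqrt w) = S/2 - sqrt w"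
      unfolding p_def by (simp add: field_simps)
    show ?thesis
      unfolding kb_omega1_def int_from e3 endpoint using True sign by simp
  next
    case False
    have endpoint: "(S + 1)/3 - Re (kb_e1 aK cK a R) = 1"
      unfolding e(2) p_def by (simp add: field_simps)
    show ?thesis
      unfolding kb_omega1_def int_from endpoint using False sign by simp
  qed
  show ?thesis
    unfolding kb_freq_def xi omega normalized_frequency_def S_def w_def ..
qed

(* That is, (1 - t1) (1 - t2) = (x0/R)^2. *)
lemma kb_root_sep_identity:
  assumes "R \<noteq> 0"
  shows "(1 - kb_root_sum aK cK a R / 2)^2 - kb_root_sep aK cK a R = (kb_x0 aK cK a R / R)^2"
  using assms
  by (simp add: kb_root_sum_def kb_root_sep_def kb_Delta_def Let_def field_simps power2_eq_square
      power4_eq_xxxx)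

lemma kb_x0_eq: "kb_x0 aK cK a R = cK / (2 * (aK^2 - cK^2)) * (R^2 - 4 * (a - aK)^2)"
  unfolding kb_x0_def by (simp add: field_simps)

lemma kb_r0_eq: "kb_r0 aK cK a R = 2 * (a - aK) - aK / (2 * (aK^2 - cK^2)) * (R^2 - 4 * (a - aK)^2)"
  unfolding kb_r0_def by (simp add: algebra_simps flip: add_divide_distrib diff_divide_distrib)

(* With u = R^2 - 4 d^2 one has x0 = m u and r0 = 2 d - k u, so Delta vanishes to second order at
   the degenerate radius R = 2 |d|. *)
lemma kb_Delta_expansion:
  fixes aK cK a R :: real
  defines "d \<equiv> a - aK" and "k \<equiv> aK / (2 * (aK^2 - cK^2))" and "m \<equiv> cK / (2 * (aK^2 - cK^2))"
    and "u \<equiv> R^2 - 4 * (a - aK)^2"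
  shows "kb_Delta aK cK a R = u^2 * (((1 + 4*d*k)^2 - 16*m^2*d^2)
      + (2*(4*d*k - 1)*(m^2 - k^2) - 4*k^2) * u + (m^2 - k^2)^2 * u^2)"
    and "R^2 + (kb_x0 aK cK a R)^2 - (kb_r0 aK cK a R)^2 = u * (1 + 4*d*k + (m^2 - k^2) * u)"
proof -
  have x0: "kb_x0 aK cK a R = m * u" and r0: "kb_r0 aK cK a R = 2 * d - k * u"
    unfolding kb_x0_eq kb_r0_eq m_def k_def u_def d_def by simp_all
  show "kb_Delta aK cK a R = u^2 * (((1 + 4*d*k)^2 - 16*m^2*d^2)
      + (2*(4*d*k - 1)*(m^2 - k^2) - 4*k^2) * u + (m^2 - k^2)^2 * u^2)"
    unfolding kb_Delta_def Let_def x0 r0 u_def d_def by algebra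
  show "R^2 + (kb_x0 aK cK a R)^2 - (kb_r0 aK cK a R)^2 = u * (1 + 4*d*k + (m^2 - k^2) * u)"
    unfolding x0 r0 u_def d_def by algebra
qed

lemma kb_Delta_leading_coeff:
  fixes aK cK a :: real
  assumes "cK < aK" "0 < cK" "aK - cK < 2 * a" "2 * a \<noteq> aK + cK"
  defines "d \<equiv> a - aK" and "k \<equiv> aK / (2 * (aK^2 - cK^2))" and "m \<equiv> cK / (2 * (aK^2 - cK^2))"
  shows "(1 + 4*d*k)^2 - 16*m^2*d^2 \<noteq> 0"
    and "0 < (1 + 4*d*k)^2 - 16*m^2*d^2 \<Longrightarrow> 0 < 1 + 4*d*k"
proof -
  have factor: "aK^2 - cK^2 = (aK - cK) * (aK + cK)"
    by (simp add: power2_eq_square algebra_simps)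
  define p1 where "p1 = 1 + 4 * d * (k - m)"
  define p2 where "p2 = 1 + 4 * d * (k + m)"
  have "k - m = (aK - cK) / (2 * ((aK - cK) * (aK + cK)))"
    unfolding k_def m_def factor by (simp add: diff_divide_distrib)
  also have "\<dots> = 1 / (2 * (aK + cK))"
    using assms(1,2) by simp
  finally have difference: "k - m = 1 / (2 * (aK + cK))" .
  have "p1 = (2 * a - aK + cK) / (aK + cK)"
    unfolding p1_def difference d_def using assms(1,2) by (simp add: field_simps)
  then have "0 < p1"
    using assms(1-3) by simp
  have "k + m = (aK + cK) / (2 * ((aK - cK) * (aK + cK)))"
    unfolding k_def m_def factor by (simp add: add_divide_distrib)
  also have "\<dots> = 1 / (2 * (aK - cK))"
    using assms(1,2) by simp
  finally have sum: "k + m = 1 / (2 * (aK - cK))" .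
  have "p2 = (2 * a - aK - cK) / (aK - cK)"
    unfolding p2_def sum d_def using assms(1,2) by (simp add: field_simps)
  then have "p2 \<noteq> 0"
    using assms(1,4) by simp
  have product: "(1 + 4*d*k)^2 - 16*m^2*d^2 = p1 * p2"
    unfolding p1_def p2_def by algebra
  show "(1 + 4*d*k)^2 - 16*m^2*d^2 \<noteq> 0"
    unfolding product using \<open>0 < p1\<close> \<open>p2 \<noteq> 0\<close> by simp
  assume "0 < (1 + 4*d*k)^2 - 16*m^2*d^2"
  then have "0 < p2"
    unfolding product using \<open>0 < p1\<close> by (simp add: zero_less_mult_iff)
  moreover have "1 + 4*d*k = (p1 + p2) / 2"
    unfolding p1_def p2_def by (simp add: algebra_simps)
  ultimately show "0 < 1 + 4*d*k"
    using \<open>0 < p1\<close> by simp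
qed

lemma kb_roots_tendsto:
  fixes aK cK a :: real
  assumes "a \<noteq> aK"
  shows "(kb_root_sum aK cK a \<longlongrightarrow> 2) (at_right (2 * \<bar>a - aK\<bar>))"
    and "(kb_root_sep aK cK a \<longlongrightarrow> 0) (at_right (2 * \<bar>a - aK\<bar>))"
proof -
  define R0 where "R0 = 2 * \<bar>a - aK\<bar>"
  have R0_sq: "R0^2 = 4 * (a - aK)^2"
    unfolding R0_def by (simp add: power_mult_distrib)
  have "R0 \<noteq> 0"
    unfolding R0_def using assms by simp
  have x0: "((\<lambda>R. kb_x0 aK cK a R) \<longlongrightarrow> 0) (at_right R0)"
  proof -
    have "((\<lambda>R. kb_x0 aK cK a R) \<longlongrightarrow> kb_x0 aK cK a R0) (at_right R0)"
      unfolding kb_x0_eq by (intro tendsto_intros)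
    moreover have "kb_x0 aK cK a R0 = 0"
      unfolding kb_x0_eq R0_sq by simp
    ultimately show ?thesis
      by simp
  qed
  have r0: "((\<lambda>R. kb_r0 aK cK a R) \<longlongrightarrow> 2 * (a - aK)) (at_right R0)"
  proof -
    have "((\<lambda>R. kb_r0 aK cK a R) \<longlongrightarrow> kb_r0 aK cK a R0) (at_right R0)"
      unfolding kb_r0_eq by (intro tendsto_intros)
    moreover have "kb_r0 aK cK a R0 = 2 * (a - aK)"
      unfolding kb_r0_eq R0_sq by simp
    ultimately show ?thesis
      by simp
  qed
  have "((\<lambda>R. kb_root_sum aK cK a R) \<longlongrightarrow> 1 - (0^2 - (2 * (a - aK))^2) / R0^2) (at_right R0)"
    unfolding kb_root_sum_def using \<open>R0 \<noteq> 0\<close> by (intro tendsto_intros x0 r0) auto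
  moreover have "1 - (0^2 - (2 * (a - aK))^2) / R0^2 = 2"
    unfolding R0_sq power_mult_distrib using assms by simp
  ultimately show "(kb_root_sum aK cK a \<longlongrightarrow> 2) (at_right (2 * \<bar>a - aK\<bar>))"
    unfolding R0_def by simp
  have "((\<lambda>R. kb_root_sep aK cK a R) \<longlongrightarrow>
      ((0^2 - (2 * (a - aK))^2 - R0^2)^2 - 4 * (2 * (a - aK))^2 * R0^2) / (4 * R0^4)) (at_right R0)"
    unfolding kb_root_sep_def kb_Delta_def Let_def using \<open>R0 \<noteq> 0\<close>
    by (intro tendsto_intros x0 r0) auto
  moreover have "(0^2 - (2 * (a - aK))^2 - R0^2)^2 - 4 * (2 * (a - aK))^2 * R0^2 = 0"
    unfolding R0_sq power_mult_distrib by (simp add: power2_eq_square)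
  ultimately show "(kb_root_sep aK cK a \<longlongrightarrow> 0) (at_right (2 * \<bar>a - aK\<bar>))"
    unfolding R0_def by simp
qed

lemma kb_root_sum_sep_lt_one:
  assumes "R \<noteq> 0" "kb_x0 aK cK a R \<noteq> 0" "0 < R^2 + (kb_x0 aK cK a R)^2 - (kb_r0 aK cK a R)^2"
  shows "kb_root_sum aK cK a R / 2 + sqrt (kb_root_sep aK cK a R) < 1"
proof -
  have "1 - kb_root_sum aK cK a R / 2 = (R^2 + (kb_x0 aK cK a R)^2 - (kb_r0 aK cK a R)^2) / (2 * R^2)"
    unfolding kb_root_sum_def using assms(1) by (simp add: field_simps)
  then have positive: "0 < 1 - kb_root_sum aK cK a R / 2"
    using assms(1,3) by simp
  have "0 < (kb_x0 aK cK a R / R)^2"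
    using assms(1,2) by simp
  then have "kb_root_sep aK cK a R < (1 - kb_root_sum aK cK a R / 2)^2"
    using kb_root_sep_identity[OF assms(1), where aK = aK and cK = cK and a = a] by linarith
  then have "sqrt (kb_root_sep aK cK a R) < 1 - kb_root_sum aK cK a R / 2"
    using positive real_sqrt_less_mono by fastforce
  then show ?thesis
    by simp
qed

lemma kb_freq_bounds:
  fixes aK cK a R :: real
  defines "S \<equiv> kb_root_sum aK cK a R" and "w \<equiv> kb_root_sep aK cK a R"
  assumes "R \<noteq> 0" "kb_Delta aK cK a R \<noteq> 0"
    and real_roots: "0 < kb_Delta aK cK a R \<Longrightarrow> 1/2 \<le> S/2 - sqrt w \<and> S/2 + sqrt w < 1"
    and complex_roots: "kb_Delta aK cK a R < 0 \<Longrightarrow> 1 \<le> S"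
  shows "0 < kb_freq aK cK a R \<and> kb_freq aK cK a R \<le> 2 * sqrt (\<bar>1 - S/2\<bar> + sqrt \<bar>w\<bar>)"
proof -
  have "0 < R^4"
    using assms(3) by simp
  then have sign: "0 < kb_Delta aK cK a R \<longleftrightarrow> 0 < w" "kb_Delta aK cK a R < 0 \<longleftrightarrow> w < 0"
    unfolding w_def kb_root_sep_def by (simp_all add: zero_less_divide_iff divide_less_0_iff)
  have frequency: "kb_freq aK cK a R = normalized_frequency S w"
    unfolding S_def w_def by (rule kb_freq_eq_normalized_frequency[OF assms(3)])
  consider "0 < kb_Delta aK cK a R" | "kb_Delta aK cK a R < 0"
    using assms(4) by linarith
  then show ?thesis
  proof cases
    case 1
    then have "0 < w" "1/2 \<le> S/2 - sqrt w" "S/2 + sqrt w < 1"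
      using real_roots sign by auto
    from normalized_frequency_bounds_real_roots[OF this] show ?thesis
      unfolding frequency ..
  next
    case 2
    then have "w < 0" "1 \<le> S"
      using complex_roots sign by auto
    from normalized_frequency_bounds_complex_roots[OF this] show ?thesis
      unfolding frequency ..
  qed
qed

lemma square_gap_at_right:
  fixes d :: real
  shows "((\<lambda>R. R^2 - 4 * d^2) \<longlongrightarrow> 0) (at_right (2 * \<bar>d\<bar>))"
    and "\<forall>\<^sub>F R in at_right (2 * \<bar>d\<bar>). 0 < R \<and> 0 < R^2 - 4 * d^2"
proof -
  have "((\<lambda>R. R^2 - 4 * d^2) \<longlongrightarrow> (2 * \<bar>d\<bar>)^2 - 4 * d^2) (at_right (2 * \<bar>d\<bar>))"
    by (intro tendsto_intros)
  then show "((\<lambda>R. R^2 - 4 * d^2) \<longlongrightarrow> 0) (at_right (2 * \<bar>d\<bar>))"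
    by (simp add: power_mult_distrib)
  show "\<forall>\<^sub>F R in at_right (2 * \<bar>d\<bar>). 0 < R \<and> 0 < R^2 - 4 * d^2"
    using eventually_at_right_less[of "2 * \<bar>d\<bar>"]
  proof eventually_elim
    case (elim R)
    then have "(2 * \<bar>d\<bar>)^2 < R^2"
      by (intro power_strict_mono) auto
    then show ?case
      using elim le_less_trans[OF _ elim] by (simp add: power_mult_distrib)
  qed
qed

lemma kb_Delta_asymptotics:
  fixes aK cK a :: real
  defines "d \<equiv> a - aK" and "k \<equiv> aK / (2 * (aK^2 - cK^2))" and "m \<equiv> cK / (2 * (aK^2 - cK^2))"
  shows "((\<lambda>R. kb_Delta aK cK a R / (R^2 - 4 * d^2)^2) \<longlongrightarrow> (1 + 4*d*k)^2 - 16*m^2*d^2)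
      (at_right (2 * \<bar>d\<bar>))"
    and "((\<lambda>R. (R^2 + (kb_x0 aK cK a R)^2 - (kb_r0 aK cK a R)^2) / (R^2 - 4 * d^2))
      \<longlongrightarrow> 1 + 4*d*k) (at_right (2 * \<bar>d\<bar>))"
proof -
  note gap = square_gap_at_right[of d]
  note expansion = kb_Delta_expansion[where aK = aK and cK = cK and a = a, folded d_def k_def m_def]
  have "((\<lambda>R. ((1 + 4*d*k)^2 - 16*m^2*d^2) + (2*(4*d*k - 1)*(m^2 - k^2) - 4*k^2) * (R^2 - 4 * d^2)
      + (m^2 - k^2)^2 * (R^2 - 4 * d^2)^2) \<longlongrightarrow> (1 + 4*d*k)^2 - 16*m^2*d^2) (at_right (2 * \<bar>d\<bar>))"
    using gap(1) by (auto intro!: tendsto_eq_intros)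
  then show "((\<lambda>R. kb_Delta aK cK a R / (R^2 - 4 * d^2)^2) \<longlongrightarrow> (1 + 4*d*k)^2 - 16*m^2*d^2)
      (at_right (2 * \<bar>d\<bar>))"
    using gap(2) by (rule Lim_transform_eventually[OF _ eventually_mono]) (simp add: expansion(1))
  have "((\<lambda>R. 1 + 4*d*k + (m^2 - k^2) * (R^2 - 4 * d^2)) \<longlongrightarrow> 1 + 4*d*k) (at_right (2 * \<bar>d\<bar>))"
    using gap(1) by (auto intro!: tendsto_eq_intros)
  then show "((\<lambda>R. (R^2 + (kb_x0 aK cK a R)^2 - (kb_r0 aK cK a R)^2) / (R^2 - 4 * d^2))
      \<longlongrightarrow> 1 + 4*d*k) (at_right (2 * \<bar>d\<bar>))"
    using gap(2) by (rule Lim_transform_eventually[OF _ eventually_mono]) (simp add: expansion(2))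
qed

lemma kb_Delta_sign_near_degenerate:
  fixes aK cK a :: real
  assumes "cK < aK" "0 < cK" "aK - cK < 2 * a" "2 * a \<noteq> aK + cK"
  defines "F \<equiv> at_right (2 * \<bar>a - aK\<bar>)"
  shows "(\<forall>\<^sub>F R in F. 0 < kb_Delta aK cK a R
            \<and> kb_root_sum aK cK a R / 2 + sqrt (kb_root_sep aK cK a R) < 1)
      \<or> (\<forall>\<^sub>F R in F. kb_Delta aK cK a R < 0)"
proof -
  define A where "A = (1 + 4*(a - aK)*(aK / (2 * (aK^2 - cK^2))))^2
    - 16*(cK / (2 * (aK^2 - cK^2)))^2*(a - aK)^2"
  note leading_coeff = kb_Delta_leading_coeff[OF assms(1-4), folded A_def]
  note asymptotics = kb_Delta_asymptotics[where aK = aK and cK = cK and a = a, folded A_def F_def]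
  note gap = square_gap_at_right(2)[of "a - aK", folded F_def]
  show ?thesis
  proof (cases "0 < A")
    case True
    have "cK^2 < aK^2"
      using assms(1,2) by (simp add: power_strict_mono)
    note order_tendstoD(1)[OF asymptotics(1) True]
      order_tendstoD(1)[OF asymptotics(2) leading_coeff(2)[OF True]]
    then have "\<forall>\<^sub>F R in F. 0 < kb_Delta aK cK a R
        \<and> kb_root_sum aK cK a R / 2 + sqrt (kb_root_sep aK cK a R) < 1"
      using gap
    proof eventually_elim
      case (elim R)
      then have "kb_x0 aK cK a R \<noteq> 0"
        unfolding kb_x0_eq using \<open>cK^2 < aK^2\<close> assms(2) by simp
      moreover have "0 < R^2 + (kb_x0 aK cK a R)^2 - (kb_r0 aK cK a R)^2"
        using elim by (simp add: zero_less_divide_iff)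
      ultimately have "kb_root_sum aK cK a R / 2 + sqrt (kb_root_sep aK cK a R) < 1"
        using elim by (intro kb_root_sum_sep_lt_one) auto
      moreover have "0 < kb_Delta aK cK a R"
        using elim by (simp add: zero_less_divide_iff)
      ultimately show ?case
        by simp
    qed
    then show ?thesis ..
  next
    case False
    then have "A < 0"
      using leading_coeff(1) by simp
    have "\<forall>\<^sub>F R in F. kb_Delta aK cK a R < 0"
      using order_tendstoD(2)[OF asymptotics(1) \<open>A < 0\<close>] gap
      by eventually_elim (simp add: divide_less_0_iff)
    then show ?thesis ..
  qed
qed

lemma kb_freq_bounds_near_degenerate:
  fixes aK cK a :: real
  assumes "cK < aK" "0 < cK" "aK - cK < 2 * a" "a \<noteq> aK" "2 * a \<noteq> aK + cK"
  defines "F \<equiv> at_right (2 * \<bar>a - aK\<bar>)"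
  shows "\<forall>\<^sub>F R in F. kb_R_ok aK cK a R \<and> 0 < kb_freq aK cK a R \<and>
      kb_freq aK cK a R \<le> 2 * sqrt (\<bar>1 - kb_root_sum aK cK a R / 2\<bar> + sqrt \<bar>kb_root_sep aK cK a R\<bar>)"
proof -
  note roots = kb_roots_tendsto[OF assms(4), folded F_def]
  have "((\<lambda>R. kb_root_sum aK cK a R / 2 - sqrt (kb_root_sep aK cK a R)) \<longlongrightarrow> 2 / 2 - sqrt 0) F"
    by (intro tendsto_intros roots) auto
  then have smaller_root: "\<forall>\<^sub>F R in F. 1/2 < kb_root_sum aK cK a R / 2 - sqrt (kb_root_sep aK cK a R)"
    by (rule order_tendstoD(1)) simp
  have root_sum: "\<forall>\<^sub>F R in F. 1 < kb_root_sum aK cK a R"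
    by (rule order_tendstoD(1)[OF roots(1)]) simp
  from kb_Delta_sign_near_degenerate[OF assms(1-3,5), folded F_def]
  have root_cases: "\<forall>\<^sub>F R in F. kb_Delta aK cK a R \<noteq> 0
      \<and> (0 < kb_Delta aK cK a R \<longrightarrow> 1/2 \<le> kb_root_sum aK cK a R / 2 - sqrt (kb_root_sep aK cK a R)
          \<and> kb_root_sum aK cK a R / 2 + sqrt (kb_root_sep aK cK a R) < 1)
      \<and> (kb_Delta aK cK a R < 0 \<longrightarrow> 1 \<le> kb_root_sum aK cK a R)"
  proof
    assume "\<forall>\<^sub>F R in F. 0 < kb_Delta aK cK a R
        \<and> kb_root_sum aK cK a R / 2 + sqrt (kb_root_sep aK cK a R) < 1"
    with smaller_root show ?thesis
      by eventually_elim auto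
  next
    assume "\<forall>\<^sub>F R in F. kb_Delta aK cK a R < 0"
    with root_sum show ?thesis
      by eventually_elim auto
  qed
  have "2 * \<bar>a - aK\<bar> < 2 * a + 2 * cK"
    using assms(1-3) by (auto simp: abs_if)
  then have "\<forall>\<^sub>F R in F. R < 2 * a + 2 * cK"
    unfolding F_def by (rule order_tendstoD(2)[OF tendsto_ident_at])
  moreover have "\<forall>\<^sub>F R in F. 2 * \<bar>a - aK\<bar> < R"
    unfolding F_def by (rule eventually_at_right_less)
  ultimately show ?thesis
    using root_cases
  proof eventually_elim
    case (elim R)
    have "\<bar>2 * aK - 2 * a\<bar> = 2 * \<bar>a - aK\<bar>"
      by (cases "a \<le> aK") auto
    then have "kb_R_ok aK cK a R"
      unfolding kb_R_ok_def using elim by simp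
    moreover have "0 < R"
      using le_less_trans[OF _ elim(2)] by simp
    then have "0 < kb_freq aK cK a R \<and>
        kb_freq aK cK a R \<le> 2 * sqrt (\<bar>1 - kb_root_sum aK cK a R / 2\<bar> + sqrt \<bar>kb_root_sep aK cK a R\<bar>)"
      using elim by (intro kb_freq_bounds) auto
    ultimately show ?case
      by simp
  qed
qed

lemma kb_freq_tendsto_zero:
  fixes aK cK a :: real
  assumes "cK < aK" "0 < cK" "aK - cK < 2 * a" "a \<noteq> aK" "2 * a \<noteq> aK + cK"
  shows "(kb_freq aK cK a \<longlongrightarrow> 0) (at_right (2 * \<bar>a - aK\<bar>))"
proof (rule tendsto_sandwich)
  note bounds = kb_freq_bounds_near_degenerate[OF assms]
  show "\<forall>\<^sub>F R in at_right (2 * \<bar>a - aK\<bar>). 0 \<le> kb_freq aK cK a R"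
    using bounds by eventually_elim simp
  show "\<forall>\<^sub>F R in at_right (2 * \<bar>a - aK\<bar>). kb_freq aK cK a R
      \<le> 2 * sqrt (\<bar>1 - kb_root_sum aK cK a R / 2\<bar> + sqrt \<bar>kb_root_sep aK cK a R\<bar>)"
    using bounds by eventually_elim simp
  note roots = kb_roots_tendsto[OF assms(4)]
  have "((\<lambda>R. 2 * sqrt (\<bar>1 - kb_root_sum aK cK a R / 2\<bar> + sqrt \<bar>kb_root_sep aK cK a R\<bar>))
      \<longlongrightarrow> 2 * sqrt (\<bar>1 - 2 / 2\<bar> + sqrt \<bar>0\<bar>)) (at_right (2 * \<bar>a - aK\<bar>))"
    by (intro tendsto_intros roots) auto
  then show "((\<lambda>R. 2 * sqrt (\<bar>1 - kb_root_sum aK cK a R / 2\<bar> + sqrt \<bar>kb_root_sep aK cK a R\<bar>))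
      \<longlongrightarrow> 0) (at_right (2 * \<bar>a - aK\<bar>))"
    by simp
qed simp

lemma pos_tendsto_zero_imp_distinct_values:
  fixes f :: "'a \<Rightarrow> real"
  assumes "F \<noteq> bot" and "\<forall>\<^sub>F x in F. P x \<and> 0 < f x" and "(f \<longlongrightarrow> 0) F"
  shows "\<exists>x y. P x \<and> P y \<and> f x \<noteq> f y"
proof -
  obtain x where x: "P x" "0 < f x"
    using eventually_happens'[OF assms(1,2)] by auto
  have "\<forall>\<^sub>F y in F. f y < f x"
    using order_tendstoD(2)[OF assms(3) x(2)] .
  with assms(2) have "\<forall>\<^sub>F y in F. P y \<and> f y < f x"
    by eventually_elim auto
  then obtain y where "P y" "f y < f x"
    using eventually_happens'[OF assms(1)] by auto
  with x show ?thesis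
    by (intro exI[of _ x] exI[of _ y]) auto
qed

theorem mainTheorem4:
  fixes aK cK :: real
  assumes "aK > cK" and "cK > 0"
  shows "AE a in lborel. 2 * a > aK - cK \<longrightarrow>
           (\<exists>R1 R2. kb_R_ok aK cK a R1 \<and> kb_R_ok aK cK a R2 \<and>
                     kb_freq aK cK a R1 \<noteq> kb_freq aK cK a R2)"
  using AE_lborel_singleton[of aK] AE_lborel_singleton[of "(aK + cK) / 2"]
proof eventually_elim
  case (elim a)
  show ?case
  proof
    assume "2 * a > aK - cK"
    then have generic: "cK < aK" "0 < cK" "aK - cK < 2 * a" "a \<noteq> aK" "2 * a \<noteq> aK + cK"
      using assms elim by auto
    show "\<exists>R1 R2. kb_R_ok aK cK a R1 \<and> kb_R_ok aK cK a R2 \<and> kb_freq aK cK a R1 \<noteq> kb_freq aK cK a R2"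
    proof (rule pos_tendsto_zero_imp_distinct_values)
      show "at_right (2 * \<bar>a - aK\<bar>) \<noteq> bot"
        by simp
      show "\<forall>\<^sub>F R in at_right (2 * \<bar>a - aK\<bar>). kb_R_ok aK cK a R \<and> 0 < kb_freq aK cK a R"
        using kb_freq_bounds_near_degenerate[OF generic] by eventually_elim simp
      show "(kb_freq aK cK a \<longlongrightarrow> 0) (at_right (2 * \<bar>a - aK\<bar>))"
        by (rule kb_freq_tendsto_zero[OF generic])
    qed
  qed
qed

end
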